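(* Let $T:V\to\mathfrak g$ be an $\mathcal O$-operator on a Lie algebra $\mathfrak g$ with respect to a representation $(V;\rho)$. Let $\Phi:\mathrm{Hom}(\wedge^kV,\mathfrak g)\to\mathrm{Hom}(\wedge^kV\otimes V,V)$ be given by $\Phi(f)(u_1,\dots,u_k,u_{k+1})=\rho(f(u_1,\dots,u_k))(u_{k+1})$. Then $\Phi$ is a homomorphism of cochain complexes from $(\bigoplus_k\mathrm{Hom}(\wedge^kV,\mathfrak g),d_{\bar\rho})$ to $(\bigoplus_k\mathrm{Hom}(\wedge^kV\otimes V,V),d_{\mathrm{reg}})$, i.e. $d_{\mathrm{reg}}\circ\Phi=\Phi\circ d_{\bar\rho}$. Consequently $\Phi$ induces homomorphisms $\Phi_*:\mathcal H^k(V,\mathfrak g)\to H^{k+1}_{\mathrm{reg}}(V,V)$.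
   Context: An $\mathcal O$-operator: linear $T:V\to\mathfrak g$ with $[Tu,Tv]=T(\rho(Tu)(v)-\rho(Tv)(u))$. Then $u\cdot_Tv=\rho(Tu)(v)$ is a pre-Lie product on $V$ with commutator $[u,v]_T=u\cdot_Tv-v\cdot_Tu$. The map $\bar\rho(u)(x)=[Tu,x]+T\rho(x)(u)$ is a representation of $(V,[\cdot,\cdot]_T)$ on $\mathfrak g$, and $d_{\bar\rho}f(u_1,\dots,u_{k+1})=\sum_{i}(-1)^{i+1}[Tu_i,f(\dots,\hat u_i,\dots)]+\sum_i(-1)^{i+1}T\rho(f(\dots,\hat u_i,\dots))(u_i)+\sum_{i<j}(-1)^{i+j}f([u_i,u_j]_T,u_1,\dots,\hat u_i,\dots,\hat u_j,\dots,u_{k+1})$ for $f\in\mathrm{Hom}(\wedge^kV,\mathfrak g)$; $\mathcal H^k(V,\mathfrak g)$ is its $k$-th cohomology (cochains of degree $k$ are $\mathrm{Hom}(\wedge^kV,\mathfrak g)$). The pre-Lie cochain complex with coefficients in the regular representation has $n$-cochains $\mathrm{Hom}(\wedge^{n-1}V\otimes V,V)$, $n\ge1$, and coboundary $(d_{\mathrm{reg}}f)(x_1,\dots,x_{n+1})=\sum_{i=1}^n(-1)^{i+1}x_i\cdot_Tf(x_1,\dots,\hat x_i,\dots,x_{n+1})+\sum_{i=1}^n(-1)^{i+1}f(x_1,\dots,\hat x_i,\dots,x_n,x_i)\cdot_Tx_{n+1}-\sum_{i=1}^n(-1)^{i+1}f(x_1,\dots,\hat x_i,\dots,x_n,x_i\cdot_Tx_{n+1})+\sum_{1\le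 i<j\le n}(-1)^{i+j}f([x_i,x_j]_T,x_1,\dots,\hat x_i,\dots,\hat x_j,\dots,x_{n+1})$; $H^n_{\mathrm{reg}}(V,V)$ is its $n$-th cohomology. *)

theory Defs
  imports Complex_Main
begin

text \<open>Vector spaces over an arbitrary field 'k are given by scalar multiplications
  (HOL's Vector_Spaces locale).  sG is the scaling on the Lie algebra g, sV on V.\<close>

definition lie_algebra :: "('k::field \<Rightarrow> 'g::ab_group_add \<Rightarrow> 'g) \<Rightarrow> ('g \<Rightarrow> 'g \<Rightarrow> 'g) \<Rightarrow> bool" where
  "lie_algebra sG br \<longleftrightarrow> vector_space sG
     \<and> (\<forall>x. Vector_Spaces.linear sG sG (br x))
     \<and> (\<forall>y. Vector_Spaces.linear sG sG (\<lambda>x. br x y))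
     \<and> (\<forall>x. br x x = 0)
     \<and> (\<forall>x y z. br x (br y z) + br y (br z x) + br z (br x y) = 0)"

definition lie_rep :: "('k::field \<Rightarrow> 'g::ab_group_add \<Rightarrow> 'g) \<Rightarrow> ('g \<Rightarrow> 'g \<Rightarrow> 'g)
     \<Rightarrow> ('k \<Rightarrow> 'v::ab_group_add \<Rightarrow> 'v) \<Rightarrow> ('g \<Rightarrow> 'v \<Rightarrow> 'v) \<Rightarrow> bool" where
  "lie_rep sG br sV \<rho> \<longleftrightarrow> vector_space sV
     \<and> (\<forall>x. Vector_Spaces.linear sV sV (\<rho> x))
     \<and> (\<forall>v. Vector_Spaces.linear sG sV (\<lambda>x. \<rho> x v))
     \<and> (\<forall>x y v. \<rho> (br x y) v = \<rho> x (\<rho> y v) - \<rho> y (\<rho> x v))"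

definition O_operator :: "('k::field \<Rightarrow> 'g::ab_group_add \<Rightarrow> 'g) \<Rightarrow> ('g \<Rightarrow> 'g \<Rightarrow> 'g)
     \<Rightarrow> ('k \<Rightarrow> 'v::ab_group_add \<Rightarrow> 'v) \<Rightarrow> ('g \<Rightarrow> 'v \<Rightarrow> 'v) \<Rightarrow> ('v \<Rightarrow> 'g) \<Rightarrow> bool" where
  "O_operator sG br sV \<rho> T \<longleftrightarrow> Vector_Spaces.linear sV sG T
     \<and> (\<forall>u v. br (T u) (T v) = T (\<rho> (T u) v - \<rho> (T v) u))"

definition preLie :: "('g \<Rightarrow> 'v \<Rightarrow> 'v) \<Rightarrow> ('v \<Rightarrow> 'g) \<Rightarrow> 'v \<Rightarrow> 'v \<Rightarrow> 'v" where
  "preLie \<rho> T u v = \<rho> (T u) v"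

definition brT :: "('g \<Rightarrow> 'v \<Rightarrow> 'v::ab_group_add) \<Rightarrow> ('v \<Rightarrow> 'g) \<Rightarrow> 'v \<Rightarrow> 'v \<Rightarrow> 'v" where
  "brT \<rho> T u v = preLie \<rho> T u v - preLie \<rho> T v u"

definition sgnp :: "nat \<Rightarrow> 'a::ab_group_add \<Rightarrow> 'a" where
  "sgnp i x = (if even i then x else - x)"

definition del :: "nat \<Rightarrow> 'a list \<Rightarrow> 'a list" where
  "del i xs = take i xs @ drop (Suc i) xs"

text \<open>Cochains are represented as functions on lists of arguments; a k-ary map is
  multilinear if linear in every slot, and alternating if it vanishes whenever two of
  the first m entries coincide.\<close>
definition multilinear :: "('k::field \<Rightarrow> 'v::ab_group_add \<Rightarrow> 'v) \<Rightarrow> ('k \<Rightarrow> 'w::ab_group_add \<Rightarrow> 'w)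
     \<Rightarrow> nat \<Rightarrow> ('v list \<Rightarrow> 'w) \<Rightarrow> bool" where
  "multilinear sV sW k f \<longleftrightarrow>
     (\<forall>xs i. length xs = k \<longrightarrow> i < k \<longrightarrow> Vector_Spaces.linear sV sW (\<lambda>v. f (xs[i := v])))"

definition alternating_first :: "nat \<Rightarrow> ('v list \<Rightarrow> 'w::zero) \<Rightarrow> nat \<Rightarrow> bool" where
  "alternating_first k f m \<longleftrightarrow>
     (\<forall>xs i j. length xs = k \<longrightarrow> i < j \<longrightarrow> j < m \<longrightarrow> xs ! i = xs ! j \<longrightarrow> f xs = 0)"

definition cochain :: "('k::field \<Rightarrow> 'v::ab_group_add \<Rightarrow> 'v) \<Rightarrow> ('k \<Rightarrow> 'g::ab_group_add \<Rightarrow> 'g)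
     \<Rightarrow> nat \<Rightarrow> ('v list \<Rightarrow> 'g) \<Rightarrow> bool" where
  "cochain sV sG k f \<longleftrightarrow> multilinear sV sG k f \<and> alternating_first k f k"

text \<open>Hom(wedge^(n-1) V \<otimes> V, V), the pre-Lie n-cochains (n \<ge> 1).\<close>
definition reg_cochain :: "('k::field \<Rightarrow> 'v::ab_group_add \<Rightarrow> 'v) \<Rightarrow> nat \<Rightarrow> ('v list \<Rightarrow> 'v) \<Rightarrow> bool" where
  "reg_cochain sV n f \<longleftrightarrow> 1 \<le> n \<and> multilinear sV sV n f \<and> alternating_first n f (n - 1)"

text \<open>The coboundary d_{bar rho}; applied to a list us = [u_1,...,u_{k+1}] (0-indexed here,
  so (-1)^(i+1) becomes sgnp i and (-1)^(i+j) keeps its parity).\<close>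
definition d_bar :: "('g::ab_group_add \<Rightarrow> 'g \<Rightarrow> 'g) \<Rightarrow> ('g \<Rightarrow> 'v::ab_group_add \<Rightarrow> 'v) \<Rightarrow> ('v \<Rightarrow> 'g)
     \<Rightarrow> ('v list \<Rightarrow> 'g) \<Rightarrow> 'v list \<Rightarrow> 'g" where
  "d_bar br \<rho> T f us =
     (\<Sum>i<length us. sgnp i (br (T (us ! i)) (f (del i us))))
   + (\<Sum>i<length us. sgnp i (T (\<rho> (f (del i us)) (us ! i))))
   + (\<Sum>j<length us. \<Sum>i<j. sgnp (i + j) (f (brT \<rho> T (us ! i) (us ! j) # del i (del j us))))"

definition d_reg :: "('g \<Rightarrow> 'v::ab_group_add \<Rightarrow> 'v) \<Rightarrow> ('v \<Rightarrow> 'g) \<Rightarrow> ('v list \<Rightarrow> 'v) \<Rightarrow> 'v list \<Rightarrow> 'v" where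
  "d_reg \<rho> T f xs =
     (let n = length xs - 1; ys = butlast xs; z = last xs in
       (\<Sum>i<n. sgnp i (preLie \<rho> T (xs ! i) (f (del i xs))))
     + (\<Sum>i<n. sgnp i (preLie \<rho> T (f (del i ys @ [ys ! i])) z))
     - (\<Sum>i<n. sgnp i (f (del i ys @ [preLie \<rho> T (ys ! i) z])))
     + (\<Sum>j<n. \<Sum>i<j. sgnp (i + j) (f (brT \<rho> T (xs ! i) (xs ! j) # del i (del j xs)))))"

definition Phi :: "('g \<Rightarrow> 'v \<Rightarrow> 'v) \<Rightarrow> ('v list \<Rightarrow> 'g) \<Rightarrow> 'v list \<Rightarrow> 'v" where
  "Phi \<rho> f xs = \<rho> (f (butlast xs)) (last xs)"

end

theory Submission
  imports Defs
begin

text \<open>Split an argument list as \<open>ys @ [z]\<close>; then \<open>\<Phi>\<close> applies the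
  additive map \<open>a \<mapsto> \<rho> a z\<close> to each term of \<open>d_bar f ys\<close>.  Since \<open>\<rho>\<close> is a representation,
  \<open>\<rho> [T y\<^sub>i, f(\<dots>)] z = \<rho>(T y\<^sub>i)(\<rho>(f \<dots>) z) - \<rho>(f \<dots>)(\<rho>(T y\<^sub>i) z)\<close>, and these two pieces are
  the first and third sums of \<open>d_reg (\<Phi> f)\<close>; the remaining sums match termwise.\<close>

lemma lie_rep_additive_left:
  assumes "lie_rep sG br sV \<rho>"
  shows "additive (\<lambda>a. \<rho> a z)"
proof -
  have "Vector_Spaces.linear sG sV (\<lambda>a. \<rho> a z)"
    using assms by (simp add: lie_rep_def)
  then show ?thesis
    unfolding additive_def Vector_Spaces.linear_iff by auto
qed

lemma lie_rep_zero_left: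
  assumes "lie_rep sG br sV \<rho>"
  shows "\<rho> 0 z = 0"
  using additive.zero[OF lie_rep_additive_left[OF assms]] by simp

lemma additive_sgnp: "additive F \<Longrightarrow> F (sgnp i x) = sgnp i (F x)"
  by (simp add: sgnp_def additive.minus)

lemma sgnp_diff: "sgnp i (a - b) = sgnp i a - (sgnp i b :: 'a::ab_group_add)"
  by (simp add: sgnp_def)

lemma del_append_last: "i < length ys \<Longrightarrow> del i (ys @ [z]) = del i ys @ [z]"
  by (simp add: del_def)

lemma length_del: "i < length ys \<Longrightarrow> length (del i ys) = length ys - 1"
  by (simp add: del_def)

lemma Phi_list_update_last:
  "length xs = Suc k \<Longrightarrow> Phi \<rho> f (xs[k := v]) = \<rho> (f (butlast xs)) v"
  by (cases xs rule: rev_cases) (simp_all add: Phi_def list_update_append)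

lemma Phi_list_update_butlast:
  "length xs = Suc k \<Longrightarrow> i < k \<Longrightarrow> Phi \<rho> f (xs[i := v]) = \<rho> (f ((butlast xs)[i := v])) (last xs)"
  by (cases xs rule: rev_cases) (simp_all add: Phi_def list_update_append)

lemma multilinear_Phi:
  fixes \<rho> :: "'g::ab_group_add \<Rightarrow> 'v::ab_group_add \<Rightarrow> 'v"
  assumes rep: "lie_rep sG br sV \<rho>" and f: "multilinear sV sG k f"
  shows "multilinear sV sV (k + 1) (Phi \<rho> f)"
  unfolding multilinear_def
proof (intro allI impI)
  fix xs :: "'v list" and i
  assume l: "length xs = k + 1" and i: "i < k + 1"
  show "Vector_Spaces.linear sV sV (\<lambda>v. Phi \<rho> f (xs[i := v]))"
  proof (cases "i = k")
    case True
    then show ?thesis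
      using rep l by (simp add: Phi_list_update_last lie_rep_def)
  next
    case False
    with i have "i < k" by simp
    have "Vector_Spaces.linear sV sG (\<lambda>v. f ((butlast xs)[i := v]))"
      using f l \<open>i < k\<close> by (simp add: multilinear_def)
    moreover have "Vector_Spaces.linear sG sV (\<lambda>a. \<rho> a (last xs))"
      using rep by (simp add: lie_rep_def)
    ultimately have "Vector_Spaces.linear sV sV ((\<lambda>a. \<rho> a (last xs)) \<circ> (\<lambda>v. f ((butlast xs)[i := v])))"
      by (rule Vector_Spaces.linear_compose)
    then show ?thesis
      using l \<open>i < k\<close> by (simp add: Phi_list_update_butlast o_def)
  qed
qed

lemma alternating_first_Phi:
  fixes \<rho> :: "'g::ab_group_add \<Rightarrow> 'v::ab_group_add \<Rightarrow> 'v"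
  assumes rep: "lie_rep sG br sV \<rho>" and f: "alternating_first k f k"
  shows "alternating_first (k + 1) (Phi \<rho> f) k"
  unfolding alternating_first_def
proof (intro allI impI)
  fix xs :: "'v list" and i j
  assume l: "length xs = k + 1" and "i < j" "j < k" and "xs ! i = xs ! j"
  then have "f (butlast xs) = 0"
    using f unfolding alternating_first_def by (metis length_butlast nth_butlast diff_add_inverse2 order.strict_trans)
  then show "Phi \<rho> f xs = 0"
    by (simp add: Phi_def lie_rep_zero_left[OF rep])
qed

lemma reg_cochain_Phi:
  assumes "lie_rep sG br sV \<rho>" and "cochain sV sG k f"
  shows "reg_cochain sV (k + 1) (Phi \<rho> f)"
  using assms multilinear_Phi alternating_first_Phi
  by (fastforce simp: cochain_def reg_cochain_def)

lemma d_reg_Phi_snoc: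
  fixes \<rho> :: "'g \<Rightarrow> 'v::ab_group_add \<Rightarrow> 'v" and ys :: "'v list"
  defines "n \<equiv> length ys"
  shows "d_reg \<rho> T (Phi \<rho> f) (ys @ [z]) =
      (\<Sum>i<n. sgnp i (\<rho> (T (ys ! i)) (\<rho> (f (del i ys)) z)))
    + (\<Sum>i<n. sgnp i (\<rho> (T (\<rho> (f (del i ys)) (ys ! i))) z))
    - (\<Sum>i<n. sgnp i (\<rho> (f (del i ys)) (\<rho> (T (ys ! i)) z)))
    + (\<Sum>j<n. \<Sum>i<j. sgnp (i + j) (\<rho> (f (brT \<rho> T (ys ! i) (ys ! j) # del i (del j ys))) z))"
proof -
  have first_sum: "(\<Sum>i<n. sgnp i (preLie \<rho> T ((ys @ [z]) ! i) (Phi \<rho> f (del i (ys @ [z])))))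
      = (\<Sum>i<n. sgnp i (\<rho> (T (ys ! i)) (\<rho> (f (del i ys)) z)))"
    by (rule sum.cong) (auto simp: n_def nth_append del_append_last Phi_def preLie_def)
  have bracket_sum: "(\<Sum>j<n. \<Sum>i<j. sgnp (i + j)
        (Phi \<rho> f (brT \<rho> T ((ys @ [z]) ! i) ((ys @ [z]) ! j) # del i (del j (ys @ [z])))))
      = (\<Sum>j<n. \<Sum>i<j. sgnp (i + j) (\<rho> (f (brT \<rho> T (ys ! i) (ys ! j) # del i (del j ys))) z))"
  proof (intro sum.cong refl)
    fix j i assume "j \<in> {..<n}" "i \<in> {..<j}"
    then have "i < length ys" "j < length ys" "i < length (del j ys)"
      by (auto simp: n_def length_del)
    then show "sgnp (i + j) (Phi \<rho> f (brT \<rho> T ((ys @ [z]) ! i) ((ys @ [z]) ! j) # del i (del j (ys @ [z]))))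
        = sgnp (i + j) (\<rho> (f (brT \<rho> T (ys ! i) (ys ! j) # del i (del j ys))) z)"
      by (simp add: nth_append del_append_last Phi_def)
  qed
  show ?thesis
    unfolding d_reg_def Let_def first_sum[symmetric] bracket_sum[symmetric]
    by (simp add: n_def Phi_def preLie_def)
qed

lemma Phi_d_bar_snoc:
  fixes ys :: "'v::ab_group_add list"
  assumes rep: "lie_rep sG br sV \<rho>"
  defines "n \<equiv> length ys"
  shows "Phi \<rho> (d_bar br \<rho> T f) (ys @ [z]) =
      (\<Sum>i<n. sgnp i (\<rho> (br (T (ys ! i)) (f (del i ys))) z))
    + (\<Sum>i<n. sgnp i (\<rho> (T (\<rho> (f (del i ys)) (ys ! i))) z))
    + (\<Sum>j<n. \<Sum>i<j. sgnp (i + j) (\<rho> (f (brT \<rho> T (ys ! i) (ys ! j) # del i (del j ys))) z))"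
proof -
  interpret additive "\<lambda>a. \<rho> a z"
    by (rule lie_rep_additive_left[OF rep])
  show ?thesis
    by (simp add: Phi_def d_bar_def n_def add sum additive_sgnp[OF additive_axioms])
qed

theorem d_reg_Phi:
  assumes rep: "lie_rep sG br sV \<rho>" and "xs \<noteq> []"
  shows "d_reg \<rho> T (Phi \<rho> f) xs = Phi \<rho> (d_bar br \<rho> T f) xs"
proof -
  obtain ys z where xs: "xs = ys @ [z]"
    using \<open>xs \<noteq> []\<close> by (metis append_butlast_last_id)
  have "\<rho> (br (T y) a) z = \<rho> (T y) (\<rho> a z) - \<rho> a (\<rho> (T y) z)" for y a
    using rep by (simp add: lie_rep_def)
  then have "(\<Sum>i<length ys. sgnp i (\<rho> (br (T (ys ! i)) (f (del i ys))) z))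
      = (\<Sum>i<length ys. sgnp i (\<rho> (T (ys ! i)) (\<rho> (f (del i ys)) z)))
      - (\<Sum>i<length ys. sgnp i (\<rho> (f (del i ys)) (\<rho> (T (ys ! i)) z)))"
    by (simp add: sgnp_diff sum_subtractf)
  then show ?thesis
    unfolding xs d_reg_Phi_snoc Phi_d_bar_snoc[OF rep] by (simp add: algebra_simps)
qed

lemma d_reg_Phi_cocycle:
  assumes rep: "lie_rep sG br sV \<rho>"
    and cocycle: "\<forall>us. length us = k + 1 \<longrightarrow> d_bar br \<rho> T f us = 0"
    and "length xs = k + 2"
  shows "d_reg \<rho> T (Phi \<rho> f) xs = 0"
proof -
  have "d_reg \<rho> T (Phi \<rho> f) xs = Phi \<rho> (d_bar br \<rho> T f) xs"
    using \<open>length xs = k + 2\<close> by (intro d_reg_Phi[OF rep]) auto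
  also have "\<dots> = 0"
    using cocycle \<open>length xs = k + 2\<close> by (simp add: Phi_def lie_rep_zero_left[OF rep])
  finally show ?thesis .
qed

lemma Phi_coboundary:
  assumes rep: "lie_rep sG br sV \<rho>"
    and coboundary: "\<forall>us. length us = k \<longrightarrow> f us = d_bar br \<rho> T h us"
    and "length xs = k + 1"
  shows "Phi \<rho> f xs = d_reg \<rho> T (Phi \<rho> h) xs"
proof -
  have "Phi \<rho> f xs = Phi \<rho> (d_bar br \<rho> T h) xs"
    using coboundary \<open>length xs = k + 1\<close> by (simp add: Phi_def)
  also have "\<dots> = d_reg \<rho> T (Phi \<rho> h) xs"
    using \<open>length xs = k + 1\<close> by (intro d_reg_Phi[OF rep, symmetric]) auto
  finally show ?thesis .
qed

theorem theorem3p6: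
  fixes sG :: "'k::field \<Rightarrow> 'g::ab_group_add \<Rightarrow> 'g"
    and sV :: "'k \<Rightarrow> 'v::ab_group_add \<Rightarrow> 'v"
    and br :: "'g \<Rightarrow> 'g \<Rightarrow> 'g"
    and \<rho> :: "'g \<Rightarrow> 'v \<Rightarrow> 'v"
    and T :: "'v \<Rightarrow> 'g"
  assumes "lie_algebra sG br"
    and "lie_rep sG br sV \<rho>"
    and "O_operator sG br sV \<rho> T"
  shows
    \<comment> \<open>Phi maps Hom(wedge^k V, g) into Hom(wedge^k V \<otimes> V, V)\<close>
    "(\<forall>k f. cochain sV sG k f \<longrightarrow> reg_cochain sV (k + 1) (Phi \<rho> f))
     \<comment> \<open>chain map: d_reg \<circ> Phi = Phi \<circ> d_bar\<close>
     \<and> (\<forall>k f. cochain sV sG k f \<longrightarrow>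
          (\<forall>xs. length xs = k + 2 \<longrightarrow> d_reg \<rho> T (Phi \<rho> f) xs = Phi \<rho> (d_bar br \<rho> T f) xs))
     \<comment> \<open>induced map on cohomology: cocycles to cocycles ...\<close>
     \<and> (\<forall>k f. cochain sV sG k f \<longrightarrow> (\<forall>us. length us = k + 1 \<longrightarrow> d_bar br \<rho> T f us = 0) \<longrightarrow>
          (\<forall>xs. length xs = k + 2 \<longrightarrow> d_reg \<rho> T (Phi \<rho> f) xs = 0))
     \<comment> \<open>... and coboundaries to coboundaries\<close>
     \<and> (\<forall>k f h. 1 \<le> k \<longrightarrow> cochain sV sG k f \<longrightarrow> cochain sV sG (k - 1) h \<longrightarrow>
          (\<forall>us. length us = k \<longrightarrow> f us = d_bar br \<rho> T h us) \<longrightarrow>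
          (\<exists>g. reg_cochain sV k g \<and>
               (\<forall>xs. length xs = k + 1 \<longrightarrow> Phi \<rho> f xs = d_reg \<rho> T g xs)))"
proof (intro conjI allI impI)
  note rep = \<open>lie_rep sG br sV \<rho>\<close>
  show "reg_cochain sV (k + 1) (Phi \<rho> f)" if "cochain sV sG k f" for k f
    using reg_cochain_Phi[OF rep that] .
  show "d_reg \<rho> T (Phi \<rho> f) xs = Phi \<rho> (d_bar br \<rho> T f) xs" if "length xs = k + 2" for k f xs
    using that by (intro d_reg_Phi[OF rep]) auto
  show "d_reg \<rho> T (Phi \<rho> f) xs = 0"
    if "\<forall>us. length us = k + 1 \<longrightarrow> d_bar br \<rho> T f us = 0" "length xs = k + 2" for k f xs
    using d_reg_Phi_cocycle[OF rep that] .
  show "\<exists>g. reg_cochain sV k g \<and> (\<forall>xs. length xs = k + 1 \<longrightarrow> Phi \<rho> f xs = d_reg \<rho> T g xs)"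
    if "1 \<le> k" "cochain sV sG (k - 1) h"
      and "\<forall>us. length us = k \<longrightarrow> f us = d_bar br \<rho> T h us" for k f h
  proof (intro exI conjI allI impI)
    show "reg_cochain sV k (Phi \<rho> h)"
      using reg_cochain_Phi[OF rep \<open>cochain sV sG (k - 1) h\<close>] \<open>1 \<le> k\<close> by simp
    show "Phi \<rho> f xs = d_reg \<rho> T (Phi \<rho> h) xs" if "length xs = k + 1" for xs
      using Phi_coboundary[OF rep _ that] \<open>\<forall>us. length us = k \<longrightarrow> f us = d_bar br \<rho> T h us\<close> .
  qed
qed

end
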